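(* Let $G$ be a compact metrizable monothetic group with Haar measure $\mu$. If $A\subset G$ has $\mu(A)>0$, then $\mu(nA)>0$ for every $n\in\mathbb{Z}\setminus\{0\}$, where $nA=\{na:a\in A\}$.
   Context: A topological group is monothetic if it has a dense cyclic subgroup (hence it is abelian). *)

theory Defs
  imports "HOL-Analysis.Analysis"
begin

definition zmult :: "int \<Rightarrow> 'a::group_add \<Rightarrow> 'a" where
  "zmult k x = (if 0 \<le> k then (((+) x) ^^ nat k) 0 else - ((((+) x) ^^ nat (- k)) 0))"

definition topological_group_add_type :: "'a::{group_add,topological_space} itself \<Rightarrow> bool" where
  "topological_group_add_type (_::'a itself) \<longleftrightarrow>
     continuous_on UNIV (\<lambda>p::'a \<times> 'a. fst p + snd p) \<and> continuous_on UNIV (uminus :: 'a \<Rightarrow> 'a)"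

definition monothetic_type :: "'a::{group_add,topological_space} itself \<Rightarrow> bool" where
  "monothetic_type (_::'a itself) \<longleftrightarrow> (\<exists>g::'a. closure (range (\<lambda>k. zmult k g)) = UNIV)"

text \<open>A (left) Haar measure on a compact group: a nonzero finite Borel measure invariant under
  left translations.  (On a compact metrizable space every finite Borel measure is regular.)\<close>
definition haar_measure :: "'a::{group_add,topological_space} measure \<Rightarrow> bool" where
  "haar_measure M \<longleftrightarrow> sets M = sets borel \<and> space M = UNIV \<and>
     emeasure M UNIV < \<infinity> \<and> emeasure M UNIV > 0 \<and>
     (\<forall>g. \<forall>B\<in>sets borel. emeasure M ((+) g ` B) = emeasure M B)"

end

theory Submission
  imports Defs
begin

text \<open>A monothetic group is abelian, since commuting with a fixed element is a closed condition
  that holds on the dense cyclic subgroup. Hence \<open>\<phi> x = n x\<close> is a continuous endomorphism and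
  its range \<open>nG\<close> is a compact subgroup; if \<open>g\<close> generates a dense cyclic subgroup, the finitely
  many cosets \<open>r g + nG\<close>, \<open>r < \<bar>n\<bar>\<close>, form a closed set containing every \<open>k g\<close>, so they
  cover \<open>G\<close> and \<open>\<mu>(nG) > 0\<close>. Now let \<open>B \<supseteq> nA\<close> be Borel. Integrating
  \<open>(x, y) \<mapsto> 1\<^sub>B(\<phi> x + y)\<close> in both orders gives, by invariance,
  \<open>\<mu>(\<phi>\<^sup>-\<^sup>1 B) \<mu>(nG) \<le> \<integral> \<mu>(B - \<phi> x) dx = \<mu>(G) \<mu>(B)\<close>, so \<open>\<mu>(B) = 0\<close> would make
  \<open>A \<subseteq> \<phi>\<^sup>-\<^sup>1 B\<close> null.\<close>

definition nmult :: "nat \<Rightarrow> 'a::group_add \<Rightarrow> 'a" where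
  "nmult m x = (((+) x) ^^ m) 0"

lemma nmult_0 [simp]: "nmult 0 x = 0"
  and nmult_Suc: "nmult (Suc m) x = x + nmult m x"
  by (simp_all add: nmult_def)

lemma nmult_add: "nmult (a + b) x = nmult a x + nmult b x"
  by (induction a) (simp_all add: nmult_Suc add.assoc)

lemma nmult_Suc_right: "nmult (Suc m) x = nmult m x + x"
  using nmult_add[of m 1 x] by (simp add: nmult_Suc)

lemma nmult_commute: "nmult a x + nmult b x = nmult b x + nmult a x"
  by (metis nmult_add add.commute)

lemma zmult_eq_nmult: "zmult k x = (if 0 \<le> k then nmult (nat k) x else - nmult (nat (- k)) x)"
  by (simp add: zmult_def nmult_def)

lemma commute_minus_left: "(a::'a::group_add) + b = b + a \<Longrightarrow> - a + b = b + - a"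
  by (metis add.assoc add.left_inverse add.right_inverse add_0 add_0_right)

lemma zmult_commute: "zmult a x + zmult b x = zmult b x + zmult a x"
proof -
  have minus_plus: "- nmult i x + nmult j x = nmult j x + - nmult i x" for i j
    using commute_minus_left nmult_commute by blast
  have minus_minus: "- nmult i x + - nmult j x = - nmult j x + - nmult i x" for i j
    using commute_minus_left[OF minus_plus[of j i, symmetric]] .
  show ?thesis
    unfolding zmult_eq_nmult
    by (simp only: split: if_split) (use nmult_commute minus_plus minus_minus in auto)
qed

lemma image_add_eq_vimage: "(+) c ` B = (\<lambda>y. - c + y) -` (B::'a::group_add set)"
  by (force simp: add.assoc[symmetric])

context
  assumes add_commute: "\<And>x y::'a::group_add. x + y = y + x"
begin

lemma nmult_add_distrib: "nmult m ((x::'a) + y) = nmult m x + nmult m y"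
  by (induction m) (simp_all add: nmult_Suc add.assoc, metis add.assoc add_commute)

lemma nmult_minus: "nmult m (- (x::'a)) = - nmult m x"
  by (induction m) (simp_all add: nmult_Suc minus_add add_commute)

lemma zmult_add_distrib: "zmult n ((x::'a) + y) = zmult n x + zmult n y"
  by (simp add: zmult_eq_nmult nmult_add_distrib minus_add add_commute)

end

lemma hom_zero:
  fixes \<phi> :: "'a::group_add \<Rightarrow> 'b::group_add"
  assumes "\<And>x y. \<phi> (x + y) = \<phi> x + \<phi> y"
  shows "\<phi> 0 = 0"
  using assms[of 0 0] by (metis add_left_cancel add.right_neutral)

lemma hom_minus:
  fixes \<phi> :: "'a::group_add \<Rightarrow> 'b::group_add"
  assumes "\<And>x y. \<phi> (x + y) = \<phi> x + \<phi> y"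
  shows "\<phi> (- x) = - \<phi> x"
  using assms[of x "- x"] hom_zero[of \<phi>, OF assms] by (simp add: minus_unique)

lemma zmult_mem_if_closed_under_generator:
  assumes "0 \<in> S" and "\<And>a. a \<in> S \<Longrightarrow> a + g \<in> S" and "\<And>a. a \<in> S \<Longrightarrow> a + - g \<in> S"
  shows "zmult k g \<in> S"
proof -
  have "nmult m g \<in> S" for m
    by (induction m) (use assms in \<open>simp_all add: nmult_Suc_right\<close>)
  moreover have "- nmult m g \<in> S" for m
    by (induction m) (use assms in \<open>simp_all add: nmult_Suc minus_add\<close>)
  ultimately show ?thesis
    by (simp add: zmult_eq_nmult)
qed

context
  fixes \<phi> :: "'a::group_add \<Rightarrow> 'a" and g :: 'a and N :: nat
  assumes add_commute: "\<And>x y::'a. x + y = y + x"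
    and hom: "\<And>x y. \<phi> (x + y) = \<phi> x + \<phi> y"
    and N_pos: "0 < N" and multiple_in_range: "nmult N g \<in> range \<phi>"
begin

lemma cosets_add_generator_closed:
  assumes "a \<in> (\<Union>r<N. (+) (nmult r g) ` range \<phi>)"
  shows "a + g \<in> (\<Union>r<N. (+) (nmult r g) ` range \<phi>)"
proof -
  obtain r x where r: "r < N" "a = nmult r g + \<phi> x"
    using assms by auto
  then have a_plus_g: "a + g = nmult (Suc r) g + \<phi> x"
    by (simp add: nmult_Suc_right add.assoc add_commute[of "\<phi> x" g])
  show ?thesis
  proof (cases "Suc r < N")
    case True
    then show ?thesis
      using a_plus_g by blast
  next
    case False
    then have "N = Suc r"
      using r by simp
    moreover obtain y where "nmult N g = \<phi> y"
      using multiple_in_range by blast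
    ultimately have "a + g = nmult 0 g + \<phi> (y + x)"
      using a_plus_g by (simp add: hom)
    then show ?thesis
      using N_pos by blast
  qed
qed

lemma cosets_minus_generator_closed:
  assumes "a \<in> (\<Union>r<N. (+) (nmult r g) ` range \<phi>)"
  shows "a + - g \<in> (\<Union>r<N. (+) (nmult r g) ` range \<phi>)"
proof -
  interpret abel_semigroup "(+) :: 'a \<Rightarrow> 'a \<Rightarrow> 'a"
    by unfold_locales (simp_all add: add.assoc add_commute)
  obtain r x where r: "r < N" "a = nmult r g + \<phi> x"
    using assms by auto
  show ?thesis
  proof (cases r)
    case (Suc r')
    then have "a + - g = nmult r' g + \<phi> x"
      using r by (simp add: nmult_Suc_right add.assoc add_commute[of "\<phi> x" "- g"] del: add_uminus_conv_diff)
    then show ?thesis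
      using Suc r by force
  next
    case 0
    obtain N' where N': "N = Suc N'"
      using N_pos gr0_implies_Suc by blast
    obtain y where y: "nmult N g = \<phi> y"
      using multiple_in_range by blast
    have "a + - g = nmult N' g + (- nmult N g + \<phi> x)"
      using r 0 N' by (simp add: nmult_Suc_right add.assoc minus_add add_commute[of "\<phi> x" "- g"]
          left_commute[of "- g" "- nmult N' g"] del: add_uminus_conv_diff)
    also have "\<dots> = nmult N' g + \<phi> (- y + x)"
      by (simp add: y hom hom_minus[of \<phi>, OF hom] del: add_uminus_conv_diff)
    finally show ?thesis
      using N' by blast
  qed
qed

lemma range_zmult_subset_cosets:
  "range (\<lambda>k. zmult k g) \<subseteq> (\<Union>r<N. (+) (nmult r g) ` range \<phi>)" (is "_ \<subseteq> ?U")
proof -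
  have "0 = nmult 0 g + \<phi> 0"
    by (simp add: hom_zero[of \<phi>, OF hom])
  then have "0 \<in> ?U"
    using N_pos by blast
  then have "zmult k g \<in> ?U" for k
    by (rule zmult_mem_if_closed_under_generator[OF _ cosets_add_generator_closed
          cosets_minus_generator_closed])
  then show ?thesis
    by blast
qed

end

lemma continuous_on_group_add:
  fixes f g :: "'b::topological_space \<Rightarrow> 'a::{group_add,topological_space}"
  assumes "topological_group_add_type TYPE('a)" and "continuous_on S f" "continuous_on S g"
  shows "continuous_on S (\<lambda>x. f x + g x)"
proof -
  have "continuous_on UNIV (\<lambda>p::'a \<times> 'a. fst p + snd p)"
    using assms(1) by (simp add: topological_group_add_type_def)
  from continuous_on_compose2[OF this continuous_on_Pair[OF assms(2,3)]] show ?thesis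
    by simp
qed

lemma continuous_on_group_minus:
  fixes f :: "'b::topological_space \<Rightarrow> 'a::{group_add,topological_space}"
  assumes "topological_group_add_type TYPE('a)" and "continuous_on S f"
  shows "continuous_on S (\<lambda>x. - f x)"
proof -
  have "continuous_on UNIV (uminus :: 'a \<Rightarrow> 'a)"
    using assms(1) by (simp add: topological_group_add_type_def)
  from continuous_on_compose2[OF this assms(2)] show ?thesis
    by simp
qed

lemma continuous_on_nmult:
  assumes "topological_group_add_type TYPE('a::{group_add,topological_space})"
  shows "continuous_on UNIV (nmult m :: 'a \<Rightarrow> 'a)"
proof (induction m)
  case (Suc m)
  then show ?case
    unfolding nmult_Suc using continuous_on_group_add[OF assms continuous_on_id] by blast
qed simp

lemma continuous_on_zmult:
  assumes "topological_group_add_type TYPE('a::{group_add,topological_space})"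
  shows "continuous_on UNIV (zmult k :: 'a \<Rightarrow> 'a)"
  unfolding zmult_eq_nmult
  using continuous_on_nmult[OF assms] continuous_on_group_minus[OF assms continuous_on_nmult[OF assms]]
  by (cases "0 \<le> k") simp_all

lemma translate_in_sets_borel:
  fixes B :: "'a::{group_add,topological_space} set"
  assumes "topological_group_add_type TYPE('a)"
    and "B \<in> sets borel"
  shows "(+) c ` B \<in> sets borel"
proof -
  have "(\<lambda>y::'a. - c + y) \<in> borel_measurable borel"
    by (intro borel_measurable_continuous_onI continuous_on_group_add[OF assms(1)]
        continuous_on_const continuous_on_id)
  from measurable_sets[OF this assms(2)] show ?thesis
    by (simp add: image_add_eq_vimage)
qed

lemma monothetic_add_commute:
  fixes x y :: "'a::{group_add,t2_space}"
  assumes top: "topological_group_add_type TYPE('a)" and "monothetic_type TYPE('a)"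
  shows "x + y = y + x"
proof -
  obtain g :: 'a where dense: "closure (range (\<lambda>k. zmult k g)) = UNIV"
    using assms(2) by (auto simp: monothetic_type_def)
  have dense_closed: "S = UNIV" if "closed S" "range (\<lambda>k. zmult k g) \<subseteq> S" for S
    using closure_minimal[OF that(2,1)] dense by blast
  have commuting_closed: "closed {x. x + c = c + x}" for c :: 'a
    by (intro closed_Collect_eq continuous_on_group_add[OF top] continuous_on_id continuous_on_const)
  have "{z. z + zmult j g = zmult j g + z} = UNIV" for j
    by (rule dense_closed[OF commuting_closed]) (auto simp: zmult_commute)
  then have "{z. z + x = x + z} = UNIV"
    by (intro dense_closed commuting_closed) (auto simp: set_eq_iff)
  then have "y + x = x + y"
    by blast
  then show ?thesis
    by (rule sym)
qed

lemma zmult_range_finite_index: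
  fixes n :: int
  assumes top: "topological_group_add_type TYPE('a::{group_add,t2_space})"
    and compact: "compact (UNIV :: 'a set)" and mono: "monothetic_type TYPE('a)" and "n \<noteq> 0"
  obtains C :: "'a::{group_add,t2_space} set" where "finite C" "(\<Union>c\<in>C. (+) c ` range (zmult n)) = UNIV"
proof -
  obtain g :: 'a where dense: "closure (range (\<lambda>k. zmult k g)) = UNIV"
    using mono by (auto simp: monothetic_type_def)
  have add_commute: "\<And>x y::'a. x + y = y + x"
    using monothetic_add_commute[OF top mono] .
  define N where "N = nat \<bar>n\<bar>"
  have "0 < N"
    using \<open>n \<noteq> 0\<close> by (simp add: N_def)
  have "nmult N g \<in> range (zmult n)"
  proof (cases "0 < n")
    case True
    then have "zmult n g = nmult N g"
      by (simp add: N_def zmult_eq_nmult)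
    then show ?thesis by (metis rangeI)
  next
    case False
    then have "zmult n (- g) = nmult N g"
      using \<open>n \<noteq> 0\<close> by (simp add: N_def zmult_eq_nmult nmult_minus[OF add_commute])
    then show ?thesis by (metis rangeI)
  qed
  then have cyclic_covered: "range (\<lambda>k. zmult k g) \<subseteq> (\<Union>r<N. (+) (nmult r g) ` range (zmult n))"
    by (rule range_zmult_subset_cosets[where \<phi> = "zmult n", OF add_commute zmult_add_distrib[OF add_commute]
        \<open>0 < N\<close>])
  have "compact ((+) c ` range (zmult n :: 'a \<Rightarrow> 'a))" for c
    by (intro compact_continuous_image continuous_on_group_add[OF top] continuous_on_const
        continuous_on_id continuous_on_zmult[OF top] compact)
  then have "closed (\<Union>r<N. (+) (nmult r g) ` range (zmult n))"
    by (intro closed_UN compact_imp_closed) auto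
  then have "(\<Union>r<N. (+) (nmult r g) ` range (zmult n)) = UNIV"
    using closure_minimal[OF cyclic_covered] dense by blast
  then show thesis
    by (intro that[of "(\<lambda>r. nmult r g) ` {..<N}"]) auto
qed

lemma haar_measure_nn_integral_indicator_translate:
  fixes M :: "'a::{group_add,topological_space} measure"
  assumes top: "topological_group_add_type TYPE('a)"
    and haar: "haar_measure M" and B: "B \<in> sets borel"
  shows "(\<integral>\<^sup>+ y. indicator B (c + y) \<partial>M) = emeasure M B"
proof -
  have sets_M: "sets M = sets borel"
    using haar by (simp add: haar_measure_def)
  have vimage: "(\<lambda>y. c + y) -` B = (+) (- c) ` B"
    by (simp add: image_add_eq_vimage)
  have "(\<integral>\<^sup>+ y. indicator B (c + y) \<partial>M) = (\<integral>\<^sup>+ y. indicator ((\<lambda>y. c + y) -` B) y \<partial>M)"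
    by (simp add: indicator_def)
  also have "\<dots> = emeasure M ((\<lambda>y. c + y) -` B)"
    using translate_in_sets_borel[OF top B] sets_M unfolding vimage
    by (intro nn_integral_indicator) simp
  also have "\<dots> = emeasure M B"
    using haar B unfolding vimage by (simp add: haar_measure_def)
  finally show ?thesis .
qed

lemma haar_measure_pos_of_translates_cover:
  fixes M :: "'a::{group_add,topological_space} measure"
  assumes top: "topological_group_add_type TYPE('a)"
    and haar: "haar_measure M" and H: "H \<in> sets borel"
    and "finite C" and cover: "(\<Union>c\<in>C. (+) c ` H) = UNIV"
  shows "emeasure M H > 0"
proof (rule ccontr)
  assume "\<not> emeasure M H > 0"
  then have null: "emeasure M H = 0"
    by simp
  have sets_M: "sets M = sets borel"
    using haar by (simp add: haar_measure_def)
  have "emeasure M UNIV \<le> (\<Sum>c\<in>C. emeasure M ((+) c ` H))"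
    unfolding cover[symmetric] using translate_in_sets_borel[OF top H] sets_M \<open>finite C\<close>
    by (intro emeasure_subadditive_finite) auto
  also have "\<dots> = 0"
    using haar H null by (simp add: haar_measure_def)
  finally show False
    using haar by (simp add: haar_measure_def)
qed

text \<open>The carrier type is not assumed to be of class \<open>second_countable_topology\<close>, so
  \<open>borel_prod\<close> is not available; a countable basis has to be produced by hand.\<close>

lemma compact_metric_countable_basis:
  assumes "compact (UNIV :: 'a set)"
  obtains B :: "'a::metric_space set set" where "countable B" "topological_basis B"
proof -
  have "\<forall>m::nat. \<exists>K. finite K \<and> (UNIV :: 'a set) \<subseteq> (\<Union>x\<in>K. ball x (1 / Suc m))"
    using assms unfolding compact_eq_totally_bounded by simp
  then obtain F where F: "\<And>m. finite (F m)" "\<And>m. (UNIV :: 'a set) \<subseteq> (\<Union>x\<in>F m. ball x (1 / Suc m))"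
    by metis
  define B where "B = (\<Union>m. (\<lambda>x. ball x (1 / Suc m)) ` F m)"
  have "countable B"
    unfolding B_def by (rule countable_UN) (simp_all add: F(1) countable_finite)
  moreover have "topological_basis B"
  proof (rule topological_basisI)
    fix U and p :: 'a
    assume "open U" "p \<in> U"
    then obtain e where "e > 0" "ball p e \<subseteq> U"
      by (rule openE)
    then obtain m :: nat where "inverse (Suc m) < e / 2"
      using reals_Archimedean[of "e / 2"] by auto
    then have m: "2 / Suc m < e"
      by (simp add: field_simps)
    obtain x where x: "x \<in> F m" "p \<in> ball x (1 / Suc m)"
      using F(2)[of m] by blast
    have "ball x (1 / Suc m) \<subseteq> ball p e"
    proof
      fix y assume "y \<in> ball x (1 / Suc m)"
      then have "dist p y < 2 / Suc m"
        using x(2) dist_triangle[of p y x] by (simp add: dist_commute)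
      then show "y \<in> ball p e"
        using m by simp
    qed
    then show "\<exists>b\<in>B. p \<in> b \<and> b \<subseteq> U"
      using x \<open>ball p e \<subseteq> U\<close> unfolding B_def by blast
  qed (auto simp: B_def)
  ultimately show thesis
    by (rule that)
qed

lemma open_in_sets_pair_borel:
  fixes A :: "'a::topological_space set set" and B :: "'b::topological_space set set"
    and W :: "('a \<times> 'b) set"
  assumes "countable A" "topological_basis A" "countable B" "topological_basis B" and "open W"
  shows "W \<in> sets (borel \<Otimes>\<^sub>M borel)"
proof -
  define P where "P = (\<lambda>(a, b). a \<times> b) ` (A \<times> B)"
  interpret countable_basis "open" P
    unfolding P_def using assms by (intro countable_basis_openI topological_basis_prod) auto
  obtain P' where "P' \<subseteq> P" "W = \<Union>P'"
    using open_countable_basisE[OF \<open>open W\<close>] .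
  moreover have "countable P'"
    using \<open>P' \<subseteq> P\<close> countable_basis by (rule countable_subset)
  moreover have "a \<times> b \<in> sets (borel \<Otimes>\<^sub>M borel)" if "a \<in> A" "b \<in> B" for a b
    using that assms(2,4) by (intro pair_measureI borel_open) (auto dest: topological_basis_open)
  then have "P' \<subseteq> sets (borel \<Otimes>\<^sub>M borel)"
    using \<open>P' \<subseteq> P\<close> unfolding P_def by auto
  ultimately show ?thesis
    by auto
qed

lemma borel_measurable_pair_compact_metric:
  fixes f :: "'a::metric_space \<times> 'a \<Rightarrow> 'b::topological_space"
  assumes "compact (UNIV :: 'a set)" and sets_M: "sets M = sets borel"
    and "continuous_on UNIV f"
  shows "f \<in> borel_measurable (M \<Otimes>\<^sub>M M)"
proof -
  obtain Bs :: "'a set set" where "countable Bs" "topological_basis Bs"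
    using compact_metric_countable_basis[OF assms(1)] .
  with assms(3) have "f \<in> borel_measurable (borel \<Otimes>\<^sub>M borel)"
    by (intro borel_measurableI) (auto simp: space_pair_measure intro: open_in_sets_pair_borel open_vimage)
  then show ?thesis
    using measurable_cong_sets[OF sets_pair_measure_cong[OF sets_M sets_M], of borel borel] by blast
qed

lemma haar_measure_vimage_hom_null:
  fixes M :: "'a::{group_add,metric_space} measure" and \<phi> :: "'a \<Rightarrow> 'a"
  assumes top: "topological_group_add_type TYPE('a)" and compact: "compact (UNIV :: 'a set)"
    and add_commute: "\<And>x y::'a. x + y = y + x" and haar: "haar_measure M"
    and cont: "continuous_on UNIV \<phi>" and hom: "\<And>x y. \<phi> (x + y) = \<phi> x + \<phi> y"
    and range_pos: "emeasure M (range \<phi>) > 0"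
    and B: "B \<in> sets M" "emeasure M B = 0"
  shows "emeasure M (\<phi> -` B) = 0"
proof -
  have sets_M: "sets M = sets borel"
    using haar by (simp add: haar_measure_def)
  interpret finite_measure M
    using haar by (intro finite_measureI) (simp add: haar_measure_def less_top)
  interpret pair_sigma_finite M M ..
  have B_borel: "B \<in> sets borel"
    using B sets_M by simp
  define C where "C = \<phi> -` B"
  have C_borel: "C \<in> sets borel"
    unfolding C_def using measurable_sets[OF borel_measurable_continuous_onI[OF cont] B_borel] by simp
  have H_borel: "range \<phi> \<in> sets borel"
    by (intro borel_closed compact_imp_closed compact_continuous_image cont compact)
  define F where "F p = (indicator B (\<phi> (fst p) + snd p) :: ennreal)" for p
  have "continuous_on UNIV (\<lambda>p::'a \<times> 'a. \<phi> (fst p) + snd p)"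
    by (intro continuous_on_group_add[OF top] continuous_on_compose2[OF cont continuous_on_fst]
        continuous_on_snd) auto
  then have F_measurable: "F \<in> borel_measurable (M \<Otimes>\<^sub>M M)"
    unfolding F_def using B_borel borel_measurable_pair_compact_metric[OF compact sets_M] by measurable
  have inner_y: "(\<integral>\<^sup>+ y. F (x, y) \<partial>M) = 0" for x
    using haar_measure_nn_integral_indicator_translate[OF top haar B_borel] B(2) by (simp add: F_def)
  have inner_x: "emeasure M C * indicator (range \<phi>) y \<le> (\<integral>\<^sup>+ x. F (x, y) \<partial>M)" for y
  proof (cases "y \<in> range \<phi>")
    case True
    then obtain z where "y = \<phi> z"
      by blast
    then have "F (x, y) = indicator C (z + x)" for x
      by (simp add: F_def C_def hom[symmetric] add_commute[of x z] indicator_def)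
    then show ?thesis
      using haar_measure_nn_integral_indicator_translate[OF top haar C_borel] True by simp
  qed simp
  have "emeasure M C * emeasure M (range \<phi>) = (\<integral>\<^sup>+ y. emeasure M C * indicator (range \<phi>) y \<partial>M)"
    using H_borel sets_M by (simp add: nn_integral_cmult_indicator)
  also have "\<dots> \<le> (\<integral>\<^sup>+ y. \<integral>\<^sup>+ x. F (x, y) \<partial>M \<partial>M)"
    by (intro nn_integral_mono inner_x)
  also have "\<dots> = (\<integral>\<^sup>+ x. \<integral>\<^sup>+ y. F (x, y) \<partial>M \<partial>M)"
    by (rule Fubini[OF F_measurable])
  also have "\<dots> = 0"
    by (simp add: inner_y)
  finally show ?thesis
    using range_pos by (auto simp: C_def)
qed

theorem lemma7p4:
  fixes M :: "'a::{group_add, metric_space} measure" and A :: "'a set" and n :: int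
  assumes "topological_group_add_type TYPE('a)"
    and "compact (UNIV :: 'a set)"
    and "monothetic_type TYPE('a)"
    and "haar_measure M"
    and "A \<in> sets (completion M)"
    and "emeasure (completion M) A > 0"
    and "n \<noteq> 0"
  shows "\<forall>B\<in>sets M. (\<lambda>a. zmult n a) ` A \<subseteq> B \<longrightarrow> emeasure M B > 0"
proof (intro ballI impI)
  fix B assume B: "B \<in> sets M" "(\<lambda>a. zmult n a) ` A \<subseteq> B"
  have add_commute: "\<And>x y::'a. x + y = y + x"
    using monothetic_add_commute[OF assms(1,3)] .
  have cont: "continuous_on UNIV (zmult n :: 'a \<Rightarrow> 'a)"
    using continuous_on_zmult[OF assms(1)] .
  obtain C :: "'a set" where "finite C" "(\<Union>c\<in>C. (+) c ` range (zmult n)) = UNIV"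
    using zmult_range_finite_index[OF assms(1-3,7)] .
  moreover have "range (zmult n :: 'a \<Rightarrow> 'a) \<in> sets borel"
    by (intro borel_closed compact_imp_closed compact_continuous_image cont assms(2))
  ultimately have "emeasure M (range (zmult n)) > 0"
    by (intro haar_measure_pos_of_translates_cover[OF assms(1,4)])
  then have "emeasure M B = 0 \<Longrightarrow> emeasure M (zmult n -` B) = 0"
    by (intro haar_measure_vimage_hom_null[where \<phi> = "zmult n", OF assms(1,2) add_commute assms(4) cont
          zmult_add_distrib[OF add_commute] _ B(1)])
  moreover have "zmult n -` B \<in> sets M" "A \<subseteq> zmult n -` B"
    using B assms(4) measurable_sets[OF borel_measurable_continuous_onI[OF cont]]
    by (auto simp: haar_measure_def)
  ultimately show "emeasure M B > 0"
    using assms(6) emeasure_mono[of A "zmult n -` B" "completion M"]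
    by (auto simp: zero_less_iff_neq_zero)
qed

end
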